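(* The function $t\mapsto \frac1t-M(t)$ is positive and decreasing on $(0,\infty)$.
   Context: For $t>0$, $M(t)=\int_0^\infty \frac{e^{-tu}}{\sqrt{u^2+1}}\,du$. *)

theory Defs
  imports "HOL-Analysis.Analysis"
begin

definition M :: "real \<Rightarrow> real" where
  "M t = integral {0..} (\<lambda>u. exp (- t * u) / sqrt (u\<^sup>2 + 1))"

end

theory Submission
  imports Defs
begin

(* Since 1/t is the Laplace transform of 1, the function 1/t - M t is the Laplace transform
   of M_weight u = 1 - 1 / sqrt (u^2 + 1), which is continuous, nonnegative and not identically zero.
   The Laplace transform of such a function is positive, and it is strictly decreasing because
   exp (- t * u) is strictly decreasing in t wherever u > 0. *)

lemma power2_plus_one_nonzero [simp]:
  "(u::real)\<^sup>2 + 1 \<noteq> 0" "\<not> (u::real)\<^sup>2 + 1 < 0"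
  by (smt (verit) zero_le_power2)+

lemma integral_atLeast_pos:
  fixes F :: "real \<Rightarrow> real"
  assumes cont: "continuous_on {a..} F" and nonneg: "\<And>u. u \<ge> a \<Longrightarrow> F u \<ge> 0"
    and int: "F integrable_on {a..}" and "b \<ge> a" and pos: "F b > 0"
  shows "integral {a..} F > 0"
proof -
  have cont_ab: "continuous_on {a..b+1} F"
    using cont by (rule continuous_on_subset) auto
  have "integral {a..b+1} F \<noteq> 0"
    using integral_eq_0_iff[OF cont_ab] nonneg pos \<open>b \<ge> a\<close> by auto
  moreover have "integral {a..b+1} F \<ge> 0"
    by (rule integral_nonneg) (auto intro: integrable_continuous_interval cont_ab nonneg)
  moreover have "integral {a..b+1} F \<le> integral {a..} F"
    by (rule integral_subset_le) (auto intro: integrable_continuous_interval cont_ab nonneg int)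
  ultimately show ?thesis by linarith
qed

lemma laplace_transform_pos:
  fixes w :: "real \<Rightarrow> real"
  assumes "continuous_on {0..} w" and "\<And>u. u \<ge> 0 \<Longrightarrow> w u \<ge> 0"
    and "b \<ge> 0" and "w b > 0"
    and "(\<lambda>u. exp (- t * u) * w u) integrable_on {0..}"
  shows "integral {0..} (\<lambda>u. exp (- t * u) * w u) > 0"
  using assms by (intro integral_atLeast_pos[of _ _ b]) (auto intro!: continuous_intros)

lemma laplace_transform_strict_decreasing:
  fixes w :: "real \<Rightarrow> real"
  assumes cont: "continuous_on {0..} w" and nonneg: "\<And>u. u \<ge> 0 \<Longrightarrow> w u \<ge> 0"
    and "b > 0" and "w b > 0" and "s < t"
    and int_s: "(\<lambda>u. exp (- s * u) * w u) integrable_on {0..}"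
    and int_t: "(\<lambda>u. exp (- t * u) * w u) integrable_on {0..}"
  shows "integral {0..} (\<lambda>u. exp (- t * u) * w u) < integral {0..} (\<lambda>u. exp (- s * u) * w u)"
proof -
  let ?d = "\<lambda>u. (exp (- s * u) - exp (- t * u)) * w u"
  have "integral {0..} ?d > 0"
  proof (rule integral_atLeast_pos[of _ _ b])
    show "continuous_on {0..} ?d"
      using cont by (auto intro!: continuous_intros)
    show "?d integrable_on {0..}"
      using integrable_diff[OF int_s int_t] by (simp add: left_diff_distrib)
    show "?d u \<ge> 0" if "u \<ge> 0" for u
      using nonneg[OF that] that \<open>s < t\<close> by (simp add: mult_right_mono)
    show "?d b > 0"
      using \<open>b > 0\<close> \<open>w b > 0\<close> \<open>s < t\<close> by simp
  qed (use \<open>b > 0\<close> in auto)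
  moreover have "integral {0..} ?d =
      integral {0..} (\<lambda>u. exp (- s * u) * w u) - integral {0..} (\<lambda>u. exp (- t * u) * w u)"
    using integral_diff[OF int_s int_t] by (simp add: left_diff_distrib)
  ultimately show ?thesis by linarith
qed

lemma has_integral_exp_neg_mult:
  "t > 0 \<Longrightarrow> ((\<lambda>u. exp (- t * u)) has_integral 1 / t) {0::real..}"
  using has_integral_exp_minus_to_infinity[of t 0] by simp

lemma M_integrand_integrable:
  assumes "t > 0"
  shows "(\<lambda>u. exp (- t * u) / sqrt (u\<^sup>2 + 1)) integrable_on {0::real..}"
proof (rule measurable_bounded_by_integrable_imp_integrable_real)
  show "(\<lambda>u. exp (- t * u) / sqrt (u\<^sup>2 + 1)) \<in> borel_measurable (lebesgue_on {0..})"
    by (rule continuous_imp_measurable_on_sets_lebesgue)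
      (auto intro!: continuous_intros simp: add_pos_nonneg)
  show "(\<lambda>u. exp (- t * u)) integrable_on {0..}"
    using has_integral_exp_neg_mult[OF assms] by blast
  show "\<bar>exp (- t * u) / sqrt (u\<^sup>2 + 1)\<bar> \<le> exp (- t * u)" for u
  proof -
    have "sqrt (u\<^sup>2 + 1) \<ge> 1" by simp
    then show ?thesis by (simp add: divide_le_eq)
  qed
qed auto

definition M_weight :: "real \<Rightarrow> real" where
  "M_weight u = 1 - 1 / sqrt (u\<^sup>2 + 1)"

lemma M_weight_nonneg: "M_weight u \<ge> 0"
  unfolding M_weight_def by (simp add: divide_le_eq)

lemma M_weight_one_pos: "M_weight 1 > 0"
  unfolding M_weight_def by (simp add: divide_less_eq)

lemma continuous_on_M_weight: "continuous_on S M_weight"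
  unfolding M_weight_def by (auto intro!: continuous_intros simp: add_pos_nonneg)

lemma has_integral_M_weight:
  assumes "t > 0"
  shows "((\<lambda>u. exp (- t * u) * M_weight u) has_integral (1 / t - M t)) {0..}"
proof -
  have "((\<lambda>u. exp (- t * u) - exp (- t * u) / sqrt (u\<^sup>2 + 1)) has_integral (1 / t - M t)) {0..}"
    unfolding M_def
    by (intro has_integral_diff has_integral_exp_neg_mult assms integrable_integral
        M_integrand_integrable)
  then show ?thesis by (simp add: M_weight_def algebra_simps)
qed

theorem proposition2:
  shows "(\<forall>t>0. 1 / t - M t > 0) \<and>
         (\<forall>s t. 0 < s \<longrightarrow> s < t \<longrightarrow> 1 / t - M t < 1 / s - M s)"
proof -
  have transform: "integral {0..} (\<lambda>u. exp (- t * u) * M_weight u) = 1 / t - M t"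
    and integrable: "(\<lambda>u. exp (- t * u) * M_weight u) integrable_on {0..}" if "t > 0" for t
    using has_integral_M_weight[OF that] by (auto simp: integral_unique)
  have "1 / t - M t > 0" if "t > 0" for t
    using laplace_transform_pos[OF continuous_on_M_weight M_weight_nonneg _ M_weight_one_pos
        integrable[OF that]] transform[OF that]
    by simp
  moreover have "1 / t - M t < 1 / s - M s" if "0 < s" "s < t" for s t
    using laplace_transform_strict_decreasing[OF continuous_on_M_weight M_weight_nonneg _
        M_weight_one_pos \<open>s < t\<close> integrable integrable] transform that
    by simp
  ultimately show ?thesis by blast
qed

end
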